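(* Let $G=(V,E)$ be a finite connected graph with boundary $\partial G\subset V$, let $\alpha\in\Pi(\partial G)$, $p\in[0,1]$, $q>0$. Let $\widetilde E\subset E$ be such that for every $e\in\widetilde E$ there exists a path in $G\cup\alpha$ connecting the two endpoints of $e$ and using only edges of $E\setminus\widetilde E$. Let $\Gamma_{\widetilde E}(e)$ be the collection of such paths, and for $e\in\widetilde E$ set \[\widetilde\varepsilon_e:=|p'-p|\;\mathbb P^G_{\min(p,p')}\big(\exists\gamma\in\Gamma_{\widetilde E}(e)\text{ such that all edges of }\gamma\text{ are open}\big).\] Then: (1) if $p<p'$, then $\phi^\alpha_{G,p,q}\preceq\mathbb P^G_{(p'-\widetilde\varepsilon_e\mathbf 1_{e\in\widetilde E})_e}$; (2) if $p>p'$, then $\mathbb P^G_{(p'+\widetilde\varepsilon_e\mathbf 1_{e\in\widetilde E})_e}\preceq\phi^\alpha_{G,p,q}$.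
   Context: Configurations are $\omega\in\{0,1\}^E$; an edge $e$ is open if $\omega(e)=1$, closed otherwise. $\Pi(\partial G)$ denotes the set of partitions of $\partial G$; vertices in the same block of $\alpha$ are called wired. $G\cup\alpha$ is the (multi)graph obtained from $G$ by identifying wired vertices. $k(\omega,\alpha)$ is the number of connected components of the graph with vertex set $V$ and edge set the open edges of $\omega$, after identifying wired vertices. The FK measure is $\phi^\alpha_{G,p,q}(\omega)=Z^{-1}\big(\prod_{e\in E}p^{\omega(e)}(1-p)^{1-\omega(e)}\big)q^{k(\omega,\alpha)}$. Set $p':=\frac{p}{p+q(1-p)}$. $\mathbb P^G_{(p_e)}$ is the product measure on $\{0,1\}^E$ where edge $e$ is open independently with probability $p_e$ ($\mathbb P^G_s$ when $p_e\equiv s$). $\mu\preceq\mu'$ means $\mu(A)\le\mu'(A)$ for all increasing events $A$. *)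

theory Defs
  imports Complex_Main "HOL-Library.Disjoint_Sets"
begin

text \<open>Configurations omega in {0,1}^E are represented by the set
of open edges (a subset of E). alpha is a partition of the boundary.\<close>

definition graph_connected :: "'v set \<Rightarrow> 'e set \<Rightarrow> ('e \<Rightarrow> 'v \<times> 'v) \<Rightarrow> bool" where
  "graph_connected V E ends \<longleftrightarrow>
     (\<forall>u\<in>V. \<forall>v\<in>V. (u, v) \<in> {(x, y). \<exists>e\<in>E. ends e = (x, y) \<or> ends e = (y, x)}\<^sup>*)"

text \<open>The vertex of G \<union> alpha represented by v: its block if v is wired, else {v}.\<close>
definition wcls :: "'v set set \<Rightarrow> 'v \<Rightarrow> 'v set" where
  "wcls \<alpha> v = (if \<exists>b\<in>\<alpha>. v \<in> b then (THE b. b \<in> \<alpha> \<and> v \<in> b) else {v})"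

definition walk_GA :: "'v set \<Rightarrow> 'v set set \<Rightarrow> ('e \<Rightarrow> 'v \<times> 'v) \<Rightarrow> 'e set \<Rightarrow> 'v \<Rightarrow> 'v \<Rightarrow> 'e list \<Rightarrow> bool" where
  "walk_GA V \<alpha> ends F x y es \<longleftrightarrow>
     (\<exists>vs. length vs = Suc (length es) \<and> set vs \<subseteq> V \<and> set es \<subseteq> F \<and>
        wcls \<alpha> (hd vs) = wcls \<alpha> x \<and> wcls \<alpha> (last vs) = wcls \<alpha> y \<and>
        (\<forall>i<length es. {wcls \<alpha> (fst (ends (es ! i))), wcls \<alpha> (snd (ends (es ! i)))}
                         = {wcls \<alpha> (vs ! i), wcls \<alpha> (vs ! Suc i)}))"

definition Gamma :: "'v set \<Rightarrow> 'e set \<Rightarrow> ('e \<Rightarrow> 'v \<times> 'v) \<Rightarrow> 'v set set \<Rightarrow> 'e set \<Rightarrow> 'e \<Rightarrow> 'e list set" where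
  "Gamma V E ends \<alpha> Et e = {es. walk_GA V \<alpha> ends (E - Et) (fst (ends e)) (snd (ends e)) es}"

definition num_clusters :: "'v set \<Rightarrow> ('e \<Rightarrow> 'v \<times> 'v) \<Rightarrow> 'v set set \<Rightarrow> 'e set \<Rightarrow> nat" where
  "num_clusters V ends \<alpha> \<omega> = card (V // ((Id_on V \<union>
      {(u, v). u \<in> V \<and> v \<in> V \<and> ((\<exists>e\<in>\<omega>. ends e = (u, v) \<or> ends e = (v, u)) \<or> (\<exists>b\<in>\<alpha>. u \<in> b \<and> v \<in> b))})\<^sup>*))"

definition fk_weight :: "'v set \<Rightarrow> 'e set \<Rightarrow> ('e \<Rightarrow> 'v \<times> 'v) \<Rightarrow> 'v set set \<Rightarrow> real \<Rightarrow> real \<Rightarrow> 'e set \<Rightarrow> real" where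
  "fk_weight V E ends \<alpha> p q \<omega> =
     (\<Prod>e\<in>E. if e \<in> \<omega> then p else 1 - p) * q ^ num_clusters V ends \<alpha> \<omega>"

definition fk_prob :: "'v set \<Rightarrow> 'e set \<Rightarrow> ('e \<Rightarrow> 'v \<times> 'v) \<Rightarrow> 'v set set \<Rightarrow> real \<Rightarrow> real \<Rightarrow> 'e set set \<Rightarrow> real" where
  "fk_prob V E ends \<alpha> p q A =
     (\<Sum>\<omega>\<in>A. fk_weight V E ends \<alpha> p q \<omega>) / (\<Sum>\<omega>\<in>Pow E. fk_weight V E ends \<alpha> p q \<omega>)"

definition prod_prob :: "'e set \<Rightarrow> ('e \<Rightarrow> real) \<Rightarrow> 'e set set \<Rightarrow> real" where
  "prod_prob E pe A = (\<Sum>\<omega>\<in>A. \<Prod>e\<in>E. if e \<in> \<omega> then pe e else 1 - pe e)"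

definition increasing_event :: "'e set \<Rightarrow> 'e set set \<Rightarrow> bool" where
  "increasing_event E A \<longleftrightarrow> A \<subseteq> Pow E \<and> (\<forall>\<omega>\<in>A. \<forall>\<omega>'. \<omega> \<subseteq> \<omega>' \<and> \<omega>' \<subseteq> E \<longrightarrow> \<omega>' \<in> A)"

definition stoch_le :: "'e set \<Rightarrow> ('e set set \<Rightarrow> real) \<Rightarrow> ('e set set \<Rightarrow> real) \<Rightarrow> bool" where
  "stoch_le E \<mu> \<nu> \<longleftrightarrow> (\<forall>A. increasing_event E A \<longrightarrow> \<mu> A \<le> \<nu> A)"

end

theory Submission
  imports Defs
begin

(* Reveal the edges one at a time, those of Et first. Given the states of all other edges, an
   edge f is open under phi^alpha_{G,p,q} with probability p if its endpoints are already connected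
   in G \<union> alpha, and with probability p' otherwise (opening f then merges two clusters and
   costs a factor q). So, whatever has been revealed, f is open with conditional probability
   between min(p,p') and max(p,p'), and a sequential coupling turns such conditional bounds into
   stochastic domination by (or of) a product measure.
   For f in Et one gains more: the edges revealed before f lie in Et, which the paths of
   Gamma(f) avoid, so by the lower bound some path of Gamma(f) is open with conditional
   probability at least P_{min(p,p')}(some path of Gamma(f) is open), and on that event f is open
   with probability exactly p. This moves the conditional probability of f from p' towards p by
   at least eps_f. *)

section \<open>Product measures\<close>

lemma prod_prob_insert:
  assumes "finite F" "e \<notin> F" "X \<subseteq> Pow (insert e F)"
  shows "prod_prob (insert e F) r X =
     r e * prod_prob F r {\<tau>\<in>Pow F. insert e \<tau> \<in> X} + (1 - r e) * prod_prob F r {\<tau>\<in>Pow F. \<tau> \<in> X}"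
proof -
  let ?g = "\<lambda>\<omega>. \<Prod>f\<in>F. if f \<in> \<omega> then r f else 1 - r f"
  let ?X1 = "{\<tau>\<in>Pow F. insert e \<tau> \<in> X}" and ?X0 = "{\<tau>\<in>Pow F. \<tau> \<in> X}"
  have g_insert: "?g (insert e \<tau>) = ?g \<tau>" for \<tau>
    using assms(2) by (intro prod.cong) auto
  have X: "X = insert e ` ?X1 \<union> ?X0"
  proof (intro set_eqI iffI)
    fix \<omega> assume \<omega>: "\<omega> \<in> X"
    show "\<omega> \<in> insert e ` ?X1 \<union> ?X0"
    proof (cases "e \<in> \<omega>")
      case True
      then have "\<omega> = insert e (\<omega> - {e})" "\<omega> - {e} \<in> ?X1"
        using \<omega> assms(3) by (auto simp: insert_absorb)
      then show ?thesis by blast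
    qed (use \<omega> assms(3) in auto)
  qed auto
  have "prod_prob (insert e F) r X
      = (\<Sum>\<omega>\<in>insert e ` ?X1 \<union> ?X0. (if e \<in> \<omega> then r e else 1 - r e) * ?g \<omega>)"
    unfolding prod_prob_def using assms(1,2) by (subst X) simp
  also have "\<dots> = (\<Sum>\<omega>\<in>insert e ` ?X1. (if e \<in> \<omega> then r e else 1 - r e) * ?g \<omega>)
                 + (\<Sum>\<omega>\<in>?X0. (if e \<in> \<omega> then r e else 1 - r e) * ?g \<omega>)"
    using assms(1,2) by (intro sum.union_disjoint) auto
  also have "(\<Sum>\<omega>\<in>insert e ` ?X1. (if e \<in> \<omega> then r e else 1 - r e) * ?g \<omega>)
      = (\<Sum>\<tau>\<in>?X1. (if e \<in> insert e \<tau> then r e else 1 - r e) * ?g (insert e \<tau>))"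
    using assms(2) by (intro sum.reindex_cong[of "insert e"]) (auto simp: inj_on_def)
  also have "\<dots> = (\<Sum>\<tau>\<in>?X1. r e * ?g \<tau>)"
    by (simp only: g_insert insertI1 if_True)
  also have "(\<Sum>\<omega>\<in>?X0. (if e \<in> \<omega> then r e else 1 - r e) * ?g \<omega>) = (\<Sum>\<tau>\<in>?X0. (1 - r e) * ?g \<tau>)"
    using assms(2) by (intro sum.cong) auto
  finally show ?thesis unfolding prod_prob_def by (simp add: sum_distrib_left)
qed

lemma prod_prob_restrict:
  assumes "finite D" "finite F" "D \<inter> F = {}" "\<And>\<omega>. P \<omega> = P (\<omega> \<inter> F)"
  shows "prod_prob (F \<union> D) r {\<omega>\<in>Pow (F \<union> D). P \<omega>} = prod_prob F r {\<tau>\<in>Pow F. P \<tau>}"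
  using assms(1,3)
proof (induction D rule: finite_induct)
  case (insert d D)
  have "P (insert d \<tau>) = P \<tau>" for \<tau>
    using assms(4)[of "insert d \<tau>"] assms(4)[of \<tau>] insert.prems by simp
  then have "{\<tau>\<in>Pow (F \<union> D). insert d \<tau> \<in> {\<omega>\<in>Pow (insert d (F \<union> D)). P \<omega>}}
      = {\<tau>\<in>Pow (F \<union> D). P \<tau>}"
    by auto
  moreover have "{\<tau>\<in>Pow (F \<union> D). \<tau> \<in> {\<omega>\<in>Pow (insert d (F \<union> D)). P \<omega>}}
      = {\<tau>\<in>Pow (F \<union> D). P \<tau>}"
    by auto
  moreover have "prod_prob (insert d (F \<union> D)) r {\<omega>\<in>Pow (insert d (F \<union> D)). P \<omega>}
      = r d * prod_prob (F \<union> D) r {\<tau>\<in>Pow (F \<union> D). insert d \<tau> \<in> {\<omega>\<in>Pow (insert d (F \<union> D)). P \<omega>}}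
      + (1 - r d) * prod_prob (F \<union> D) r {\<tau>\<in>Pow (F \<union> D). \<tau> \<in> {\<omega>\<in>Pow (insert d (F \<union> D)). P \<omega>}}"
    using insert assms(2) by (intro prod_prob_insert) auto
  ultimately show ?case
    using insert by (simp add: algebra_simps)
qed simp

lemma prod_prob_Pow:
  assumes "finite E"
  shows "prod_prob E r (Pow E) = 1"
proof -
  have "prod_prob E r (Pow E) = (\<Sum>\<omega>\<in>Pow E. (\<Prod>e\<in>\<omega>. r e) * (\<Prod>e\<in>E - \<omega>. 1 - r e))"
    unfolding prod_prob_def
  proof (intro sum.cong refl)
    fix \<omega> assume "\<omega> \<in> Pow E"
    then have "E \<inter> {e. e \<in> \<omega>} = \<omega>" "E \<inter> - {e. e \<in> \<omega>} = E - \<omega>" by auto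
    then show "(\<Prod>e\<in>E. if e \<in> \<omega> then r e else 1 - r e) = (\<Prod>e\<in>\<omega>. r e) * (\<Prod>e\<in>E - \<omega>. 1 - r e)"
      using assms by (simp add: prod.If_cases)
  qed
  also have "\<dots> = (\<Prod>e\<in>E. r e + (1 - r e))"
    by (rule prod_add[OF assms, symmetric])
  finally show ?thesis by simp
qed

lemma prod_prob_insert_event:
  assumes "finite F" "e \<notin> F"
  shows "prod_prob (insert e F) r {\<tau>\<in>Pow (insert e F). \<sigma> \<union> \<tau> \<in> A}
       = r e * prod_prob F r {\<tau>\<in>Pow F. insert e \<sigma> \<union> \<tau> \<in> A} + (1 - r e) * prod_prob F r {\<tau>\<in>Pow F. \<sigma> \<union> \<tau> \<in> A}"
proof -
  have "{\<tau>\<in>Pow F. insert e \<tau> \<in> {\<tau>\<in>Pow (insert e F). \<sigma> \<union> \<tau> \<in> A}} = {\<tau>\<in>Pow F. insert e \<sigma> \<union> \<tau> \<in> A}"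
       "{\<tau>\<in>Pow F. \<tau> \<in> {\<tau>\<in>Pow (insert e F). \<sigma> \<union> \<tau> \<in> A}} = {\<tau>\<in>Pow F. \<sigma> \<union> \<tau> \<in> A}"
    by auto
  moreover have "prod_prob (insert e F) r {\<tau>\<in>Pow (insert e F). \<sigma> \<union> \<tau> \<in> A}
      = r e * prod_prob F r {\<tau>\<in>Pow F. insert e \<tau> \<in> {\<tau>\<in>Pow (insert e F). \<sigma> \<union> \<tau> \<in> A}}
        + (1 - r e) * prod_prob F r {\<tau>\<in>Pow F. \<tau> \<in> {\<tau>\<in>Pow (insert e F). \<sigma> \<union> \<tau> \<in> A}}"
    by (rule prod_prob_insert[OF assms]) auto
  ultimately show ?thesis
    by simp
qed

lemma prod_prob_nonneg:
  assumes "\<forall>e\<in>E. 0 \<le> r e \<and> r e \<le> 1"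
  shows "0 \<le> prod_prob E r X"
  unfolding prod_prob_def using assms by (intro sum_nonneg prod_nonneg) auto

lemma prod_prob_mono:
  assumes "\<forall>e\<in>E. 0 \<le> r e \<and> r e \<le> 1" "finite Y" "X \<subseteq> Y"
  shows "prod_prob E r X \<le> prod_prob E r Y"
  unfolding prod_prob_def using assms by (intro sum_mono2 prod_nonneg) auto

lemma prod_prob_le_1:
  assumes "finite E" "\<forall>e\<in>E. 0 \<le> r e \<and> r e \<le> 1" "X \<subseteq> Pow E"
  shows "prod_prob E r X \<le> 1"
  using prod_prob_mono[OF assms(2) _ assms(3)] prod_prob_Pow[OF assms(1)] assms(1) by simp

lemma prod_prob_Diff:
  assumes "finite E" "X \<subseteq> Pow E"
  shows "prod_prob E r (Pow E - X) = 1 - prod_prob E r X"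
  using prod_prob_Pow[OF assms(1), of r] assms unfolding prod_prob_def
  by (simp add: sum_diff finite_subset)

lemma prod_prob_complement_image:
  assumes "X \<subseteq> Pow E"
  shows "prod_prob E (\<lambda>e. 1 - r e) ((\<lambda>\<omega>. E - \<omega>) ` X) = prod_prob E r X"
  unfolding prod_prob_def
proof (rule sum.reindex_cong)
  show "inj_on (\<lambda>\<omega>. E - \<omega>) X"
    using assms by (auto simp: inj_on_def)
  show "(\<Prod>e\<in>E. if e \<in> E - \<omega> then 1 - r e else 1 - (1 - r e)) = (\<Prod>e\<in>E. if e \<in> \<omega> then r e else 1 - r e)"
    for \<omega> by (intro prod.cong) auto
qed simp

lemma sum_if_mult_eq:
  fixes a b :: real
  assumes "finite Q"
  shows "(\<Sum>\<eta>\<in>Q. (if P \<eta> then a else b) * g \<eta>) = b * sum g Q + (a - b) * sum g {\<eta>\<in>Q. P \<eta>}"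
proof -
  have "(\<Sum>\<eta>\<in>Q. (if P \<eta> then a else b) * g \<eta>) = (\<Sum>\<eta>\<in>Q. b * g \<eta> + (a - b) * (if P \<eta> then g \<eta> else 0))"
    by (intro sum.cong) (simp_all add: left_diff_distrib)
  also have "\<dots> = b * sum g Q + (a - b) * (\<Sum>\<eta>\<in>Q. if P \<eta> then g \<eta> else 0)"
    by (simp only: sum.distrib sum_distrib_left)
  also have "(\<Sum>\<eta>\<in>Q. if P \<eta> then g \<eta> else 0) = sum g {\<eta>\<in>Q. P \<eta>}"
    by (rule sum.inter_filter[OF assms, symmetric])
  finally show ?thesis .
qed

section \<open>Cylinder sums\<close>

definition cylinder :: "'e set \<Rightarrow> 'e set \<Rightarrow> 'e set \<Rightarrow> 'e set set" where
  "cylinder E K \<sigma> = {\<omega>\<in>Pow E. \<omega> \<inter> K = \<sigma>}"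

lemma finite_cylinder [simp]: "finite E \<Longrightarrow> finite (cylinder E K \<sigma>)"
  by (simp add: cylinder_def)

lemma cylinder_empty [simp]: "cylinder E {} {} = Pow E"
  by (auto simp: cylinder_def)

lemma sum_cylinder_split:
  assumes "finite E" "e \<notin> K" "e \<notin> \<sigma>"
  shows "sum g (cylinder E K \<sigma> \<inter> X)
       = sum g (cylinder E (insert e K) (insert e \<sigma>) \<inter> X) + sum g (cylinder E (insert e K) \<sigma> \<inter> X)"
proof -
  have "cylinder E K \<sigma> \<inter> X = (cylinder E (insert e K) (insert e \<sigma>) \<inter> X) \<union> (cylinder E (insert e K) \<sigma> \<inter> X)"
    using assms(2,3) by (auto simp: cylinder_def)
  moreover have "(cylinder E (insert e K) (insert e \<sigma>) \<inter> X) \<inter> (cylinder E (insert e K) \<sigma> \<inter> X) = {}"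
    using assms(3) by (auto simp: cylinder_def)
  ultimately show ?thesis
    using assms(1) by (simp add: sum.union_disjoint)
qed

lemma sum_cylinder_complement:
  assumes "K \<subseteq> E" "\<sigma> \<subseteq> K"
  shows "sum (\<lambda>\<omega>. g (E - \<omega>)) (cylinder E K \<sigma>) = sum g (cylinder E K (K - \<sigma>))"
proof (rule sum.reindex_bij_betw)
  show "bij_betw (\<lambda>\<omega>. E - \<omega>) (cylinder E K \<sigma>) (cylinder E K (K - \<sigma>))"
  proof (rule bij_betw_byWitness[where f' = "\<lambda>\<omega>. E - \<omega>"])
    show "(\<lambda>\<omega>. E - \<omega>) ` cylinder E K \<sigma> \<subseteq> cylinder E K (K - \<sigma>)"
      "(\<lambda>\<omega>. E - \<omega>) ` cylinder E K (K - \<sigma>) \<subseteq> cylinder E K \<sigma>"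
      using assms by (auto simp: cylinder_def)
  qed (auto simp: cylinder_def)
qed

lemma sum_cylinder_insert:
  assumes "finite E" "f \<in> E" "f \<notin> K" "\<sigma> \<subseteq> K"
  shows "sum g (cylinder E (insert f K) (insert f \<sigma>)) = (\<Sum>\<eta>\<in>cylinder (E - {f}) K \<sigma>. g (insert f \<eta>))"
    and "sum g (cylinder E K \<sigma>) = (\<Sum>\<eta>\<in>cylinder (E - {f}) K \<sigma>. g (insert f \<eta>) + g \<eta>)"
proof -
  have "cylinder E (insert f K) (insert f \<sigma>) = insert f ` cylinder (E - {f}) K \<sigma>"
  proof (intro set_eqI iffI)
    fix \<omega> assume "\<omega> \<in> cylinder E (insert f K) (insert f \<sigma>)"
    then have "\<omega> = insert f (\<omega> - {f})" "\<omega> - {f} \<in> cylinder (E - {f}) K \<sigma>"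
      using assms(3,4) by (auto simp: cylinder_def)
    then show "\<omega> \<in> insert f ` cylinder (E - {f}) K \<sigma>" by blast
  qed (use assms in \<open>auto simp: cylinder_def\<close>)
  moreover have "inj_on (insert f) (cylinder (E - {f}) K \<sigma>)"
    by (auto simp: inj_on_def cylinder_def)
  ultimately show open_f: "sum g (cylinder E (insert f K) (insert f \<sigma>)) = (\<Sum>\<eta>\<in>cylinder (E - {f}) K \<sigma>. g (insert f \<eta>))"
    by (simp add: sum.reindex)
  have "cylinder E (insert f K) \<sigma> = cylinder (E - {f}) K \<sigma>"
    using assms(3,4) by (auto simp: cylinder_def)
  then show "sum g (cylinder E K \<sigma>) = (\<Sum>\<eta>\<in>cylinder (E - {f}) K \<sigma>. g (insert f \<eta>) + g \<eta>)"
    using sum_cylinder_split[OF assms(1,3), of \<sigma> g UNIV] assms(3,4) open_f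
    by (auto simp: sum.distrib)
qed

lemma sum_cylinder_shift:
  assumes "\<sigma> \<subseteq> K" "K \<subseteq> E"
  shows "sum g (cylinder E K \<sigma>) = (\<Sum>\<tau>\<in>Pow (E - K). g (\<sigma> \<union> \<tau>))"
proof (rule sum.reindex_bij_betw[symmetric])
  show "bij_betw (\<lambda>\<tau>. \<sigma> \<union> \<tau>) (Pow (E - K)) (cylinder E K \<sigma>)"
    by (rule bij_betw_byWitness[where f' = "\<lambda>\<omega>. \<omega> - K"]) (use assms in \<open>auto simp: cylinder_def\<close>)
qed

lemma sum_cylinder_shift_filter:
  assumes "finite E" "\<sigma> \<subseteq> K" "K \<subseteq> E" "\<And>\<tau>. \<tau> \<subseteq> E - K \<Longrightarrow> P (\<sigma> \<union> \<tau>) \<longleftrightarrow> P \<tau>"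
  shows "sum g {\<eta>\<in>cylinder E K \<sigma>. P \<eta>} = (\<Sum>\<tau>\<in>{\<tau>\<in>Pow (E - K). P \<tau>}. g (\<sigma> \<union> \<tau>))"
proof -
  have "sum g {\<eta>\<in>cylinder E K \<sigma>. P \<eta>} = (\<Sum>\<eta>\<in>cylinder E K \<sigma>. if P \<eta> then g \<eta> else 0)"
    by (rule sum.inter_filter) (simp add: assms(1))
  also have "\<dots> = (\<Sum>\<tau>\<in>Pow (E - K). if P (\<sigma> \<union> \<tau>) then g (\<sigma> \<union> \<tau>) else 0)"
    by (rule sum_cylinder_shift[OF assms(2,3)])
  also have "\<dots> = (\<Sum>\<tau>\<in>Pow (E - K). if P \<tau> then g (\<sigma> \<union> \<tau>) else 0)"
    using assms(4) by (intro sum.cong) auto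
  also have "\<dots> = (\<Sum>\<tau>\<in>{\<tau>\<in>Pow (E - K). P \<tau>}. g (\<sigma> \<union> \<tau>))"
    by (rule sum.inter_filter[symmetric]) (simp add: assms(1))
  finally show ?thesis .
qed

section \<open>Sequential stochastic domination\<close>

(* Unnormalised conditional probabilities: under the weight w, given the states sigma of the
   edges preceding f in L, the edge f is open with probability at most (at least) r f. *)
definition open_given_prefix_le :: "'e set \<Rightarrow> ('e set \<Rightarrow> real) \<Rightarrow> ('e \<Rightarrow> real) \<Rightarrow> 'e list \<Rightarrow> bool" where
  "open_given_prefix_le E w r L \<longleftrightarrow> (\<forall>L1 f L2 \<sigma>. L = L1 @ f # L2 \<longrightarrow> \<sigma> \<subseteq> set L1 \<longrightarrow>
     sum w (cylinder E (insert f (set L1)) (insert f \<sigma>)) \<le> r f * sum w (cylinder E (set L1) \<sigma>))"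

definition open_given_prefix_ge :: "'e set \<Rightarrow> ('e set \<Rightarrow> real) \<Rightarrow> ('e \<Rightarrow> real) \<Rightarrow> 'e list \<Rightarrow> bool" where
  "open_given_prefix_ge E w r L \<longleftrightarrow> (\<forall>L1 f L2 \<sigma>. L = L1 @ f # L2 \<longrightarrow> \<sigma> \<subseteq> set L1 \<longrightarrow>
     r f * sum w (cylinder E (set L1) \<sigma>) \<le> sum w (cylinder E (insert f (set L1)) (insert f \<sigma>)))"

lemma increasing_eventD:
  "increasing_event E A \<Longrightarrow> \<omega> \<in> A \<Longrightarrow> \<omega> \<subseteq> \<omega>' \<Longrightarrow> \<omega>' \<subseteq> E \<Longrightarrow> \<omega>' \<in> A"
  unfolding increasing_event_def by blast

lemma open_given_prefix_leD:
  "open_given_prefix_le E w r (L1 @ f # L2) \<Longrightarrow> \<sigma> \<subseteq> set L1 \<Longrightarrow>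
     sum w (cylinder E (insert f (set L1)) (insert f \<sigma>)) \<le> r f * sum w (cylinder E (set L1) \<sigma>)"
  unfolding open_given_prefix_le_def by blast

lemma open_given_prefix_geD:
  "open_given_prefix_ge E w r (L1 @ f # L2) \<Longrightarrow> \<sigma> \<subseteq> set L1 \<Longrightarrow>
     r f * sum w (cylinder E (set L1) \<sigma>) \<le> sum w (cylinder E (insert f (set L1)) (insert f \<sigma>))"
  unfolding open_given_prefix_ge_def by blast

lemma open_given_prefix_ge_pointwise:
  assumes "finite D" "distinct L" "set L = D"
    and "\<And>f \<eta>. f \<in> D \<Longrightarrow> \<eta> \<subseteq> D - {f} \<Longrightarrow> c * (v (insert f \<eta>) + v \<eta>) \<le> v (insert f \<eta>)"
  shows "open_given_prefix_ge D v (\<lambda>_. c) L"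
  unfolding open_given_prefix_ge_def
proof (intro allI impI)
  fix L1 f L2 \<sigma> assume L1: "L = L1 @ f # L2" "\<sigma> \<subseteq> set L1"
  have f: "f \<in> D" "f \<notin> set L1"
    using assms(2,3) L1 by auto
  have "c * (v (insert f \<eta>) + v \<eta>) \<le> v (insert f \<eta>)" if "\<eta> \<in> cylinder (D - {f}) (set L1) \<sigma>" for \<eta>
    using assms(4)[OF f(1)] that by (simp add: cylinder_def)
  then show "c * sum v (cylinder D (set L1) \<sigma>) \<le> sum v (cylinder D (insert f (set L1)) (insert f \<sigma>))"
    unfolding sum_cylinder_insert[OF assms(1) f L1(2)] sum_distrib_left by (rule sum_mono)
qed

lemma sum_cylinder_event_le:
  assumes "finite E" "distinct L" "set L = E"
    and w: "\<forall>\<omega>\<in>Pow E. 0 \<le> w \<omega>" and r: "\<forall>e\<in>E. 0 \<le> r e \<and> r e \<le> 1"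
    and open_le: "open_given_prefix_le E w r L" and A: "increasing_event E A"
    and "L = Ls @ Lr" "\<sigma> \<subseteq> set Ls"
  shows "sum w (cylinder E (set Ls) \<sigma> \<inter> A)
       \<le> sum w (cylinder E (set Ls) \<sigma>) * prod_prob (set Lr) r {\<tau>\<in>Pow (set Lr). \<sigma> \<union> \<tau> \<in> A}"
  using assms(8,9)
proof (induction Lr arbitrary: Ls \<sigma>)
  case Nil
  then have "cylinder E (set Ls) \<sigma> = {\<sigma>}"
    using assms(3) by (auto simp: cylinder_def)
  moreover have "{\<tau>\<in>Pow (set []). \<sigma> \<union> \<tau> \<in> A} = (if \<sigma> \<in> A then {{}} else {})"
    by auto
  ultimately show ?case
    by (simp add: prod_prob_def)
next
  case (Cons e Lr)
  let ?K = "set Ls"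
  let ?W = "sum w (cylinder E ?K \<sigma>)"
  let ?Wo = "sum w (cylinder E (insert e ?K) (insert e \<sigma>))"
  let ?Wc = "sum w (cylinder E (insert e ?K) \<sigma>)"
  let ?a = "prod_prob (set Lr) r {\<tau>\<in>Pow (set Lr). insert e \<sigma> \<union> \<tau> \<in> A}"
  let ?b = "prod_prob (set Lr) r {\<tau>\<in>Pow (set Lr). \<sigma> \<union> \<tau> \<in> A}"
  have L: "L = (Ls @ [e]) @ Lr" and e: "e \<notin> ?K" "e \<notin> \<sigma>" "e \<notin> set Lr" "e \<in> E"
    and sub: "?K \<subseteq> E" "set Lr \<subseteq> E"
    using Cons.prems assms(2,3) by auto
  have open_e: "?Wo \<le> r e * ?W"
    using open_given_prefix_leD[OF open_le[unfolded Cons.prems(1)] Cons.prems(2)] .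
  have IH_open: "sum w (cylinder E (insert e ?K) (insert e \<sigma>) \<inter> A) \<le> ?Wo * ?a"
    using Cons.IH[OF L, of "insert e \<sigma>"] Cons.prems by auto
  have IH_closed: "sum w (cylinder E (insert e ?K) \<sigma> \<inter> A) \<le> ?Wc * ?b"
    using Cons.IH[OF L, of \<sigma>] Cons.prems by auto
  have "insert e \<sigma> \<union> \<tau> \<in> A" if "\<tau> \<subseteq> set Lr" "\<sigma> \<union> \<tau> \<in> A" for \<tau>
  proof (rule increasing_eventD[OF A that(2)])
    show "insert e \<sigma> \<union> \<tau> \<subseteq> E"
      using that(1) e(4) sub Cons.prems(2) by blast
  qed blast
  then have "?b \<le> ?a"
    using r sub(2) by (intro prod_prob_mono) auto
  have W: "?W = ?Wo + ?Wc"
    using sum_cylinder_split[OF assms(1) e(1,2), of w UNIV] by simp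
  have P: "prod_prob (set (e # Lr)) r {\<tau>\<in>Pow (set (e # Lr)). \<sigma> \<union> \<tau> \<in> A} = r e * ?a + (1 - r e) * ?b"
    using prod_prob_insert_event[OF _ e(3)] by simp
  have "sum w (cylinder E ?K \<sigma> \<inter> A)
      = sum w (cylinder E (insert e ?K) (insert e \<sigma>) \<inter> A) + sum w (cylinder E (insert e ?K) \<sigma> \<inter> A)"
    by (rule sum_cylinder_split[OF assms(1) e(1,2)])
  also have "\<dots> \<le> ?Wo * ?a + ?Wc * ?b"
    using IH_open IH_closed by (rule add_mono)
  also have "\<dots> = ?W * ?b + ?Wo * (?a - ?b)"
    using W by (simp add: algebra_simps)
  \<comment> \<open>The open branch carries at most the fraction r e of the weight, and A is likelier there.\<close>
  also have "\<dots> \<le> ?W * ?b + (r e * ?W) * (?a - ?b)"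
    using open_e \<open>?b \<le> ?a\<close> by (intro add_left_mono mult_right_mono) auto
  also have "\<dots> = ?W * (r e * ?a + (1 - r e) * ?b)"
    by (simp add: algebra_simps)
  finally show ?case
    unfolding P .
qed

lemma sum_event_le_prod_prob:
  assumes "finite E" "distinct L" "set L = E"
    and "\<forall>\<omega>\<in>Pow E. 0 \<le> w \<omega>" "\<forall>e\<in>E. 0 \<le> r e \<and> r e \<le> 1"
    and "open_given_prefix_le E w r L" and A: "increasing_event E A"
  shows "sum w A \<le> sum w (Pow E) * prod_prob E r A"
proof -
  have "{\<tau>\<in>Pow E. {} \<union> \<tau> \<in> A} = A" "Pow E \<inter> A = A"
    using A by (auto simp: increasing_event_def)
  then show ?thesis
    using sum_cylinder_event_le[OF assms, of "[]" L "{}"] assms(3) by simp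
qed

lemma open_given_prefix_ge_complement:
  assumes "finite E" "distinct L" "set L = E" and open_ge: "open_given_prefix_ge E w r L"
  shows "open_given_prefix_le E (\<lambda>\<omega>. w (E - \<omega>)) (\<lambda>e. 1 - r e) L"
  unfolding open_given_prefix_le_def
proof (intro allI impI)
  fix L1 f L2 \<sigma> assume L: "L = L1 @ f # L2" and \<sigma>: "\<sigma> \<subseteq> set L1"
  let ?K = "set L1"
  have f: "f \<notin> ?K" "f \<notin> ?K - \<sigma>" and K: "insert f ?K \<subseteq> E"
    using assms(2,3) L by auto
  have "sum (\<lambda>\<omega>. w (E - \<omega>)) (cylinder E (insert f ?K) (insert f \<sigma>)) = sum w (cylinder E (insert f ?K) (?K - \<sigma>))"
    using sum_cylinder_complement[OF K insert_mono[OF \<sigma>], of w] f(1) by (simp add: insert_Diff_if)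
  moreover have "sum (\<lambda>\<omega>. w (E - \<omega>)) (cylinder E ?K \<sigma>) = sum w (cylinder E ?K (?K - \<sigma>))"
    using sum_cylinder_complement[of ?K E \<sigma> w] K \<sigma> by simp
  moreover have "sum w (cylinder E ?K (?K - \<sigma>))
      = sum w (cylinder E (insert f ?K) (insert f (?K - \<sigma>))) + sum w (cylinder E (insert f ?K) (?K - \<sigma>))"
    using sum_cylinder_split[OF assms(1) f, of w UNIV] by simp
  moreover have "r f * sum w (cylinder E ?K (?K - \<sigma>)) \<le> sum w (cylinder E (insert f ?K) (insert f (?K - \<sigma>)))"
    using open_given_prefix_geD[OF open_ge[unfolded L]] by blast
  ultimately show "sum (\<lambda>\<omega>. w (E - \<omega>)) (cylinder E (insert f ?K) (insert f \<sigma>))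
      \<le> (1 - r f) * sum (\<lambda>\<omega>. w (E - \<omega>)) (cylinder E ?K \<sigma>)"
    by (simp add: algebra_simps)
qed

(* The mirror image of sum_event_le_prod_prob under omega \<mapsto> E - omega, which exchanges open
   and closed edges and turns the complement of an increasing event into an increasing event. *)
lemma prod_prob_le_sum_event:
  assumes "finite E" "distinct L" "set L = E"
    and w: "\<forall>\<omega>\<in>Pow E. 0 \<le> w \<omega>" and r: "\<forall>e\<in>E. 0 \<le> r e \<and> r e \<le> 1"
    and open_ge: "open_given_prefix_ge E w r L" and A: "increasing_event E A"
  shows "sum w (Pow E) * prod_prob E r A \<le> sum w A"
proof -
  let ?c = "\<lambda>\<omega>. E - \<omega>"
  let ?A' = "?c ` (Pow E - A)"
  have AE: "A \<subseteq> Pow E"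
    using A by (simp add: increasing_event_def)
  have A': "increasing_event E ?A'"
    unfolding increasing_event_def
  proof (intro conjI ballI allI impI)
    fix \<omega> \<omega>' assume "\<omega> \<in> ?A'" and \<omega>': "\<omega> \<subseteq> \<omega>' \<and> \<omega>' \<subseteq> E"
    then obtain \<mu> where \<mu>: "\<mu> \<subseteq> E" "\<mu> \<notin> A" "\<omega> = E - \<mu>" by auto
    have "E - \<omega>' \<notin> A"
      using increasing_eventD[OF A, of "E - \<omega>'" \<mu>] \<mu> \<omega>' by blast
    then show "\<omega>' \<in> ?A'"
      using \<omega>' by (intro image_eqI[of _ _ "E - \<omega>'"]) auto
  qed auto
  have w': "\<forall>\<omega>\<in>Pow E. 0 \<le> w (E - \<omega>)" and r': "\<forall>e\<in>E. 0 \<le> 1 - r e \<and> 1 - r e \<le> 1"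
    using w r by auto
  have "sum (\<lambda>\<omega>. w (E - \<omega>)) ?A'
      \<le> sum (\<lambda>\<omega>. w (E - \<omega>)) (Pow E) * prod_prob E (\<lambda>e. 1 - r e) ?A'"
    by (rule sum_event_le_prod_prob[OF assms(1-3) w' r' open_given_prefix_ge_complement[OF assms(1-3) open_ge] A'])
  moreover have "sum (\<lambda>\<omega>. w (E - \<omega>)) ?A' = sum w (Pow E - A)"
    by (rule sum.reindex_cong[of ?c]) (auto simp: inj_on_def Diff_Diff_Int Int_absorb1)
  moreover have "sum (\<lambda>\<omega>. w (E - \<omega>)) (Pow E) = sum w (Pow E)"
    using sum_cylinder_complement[of "{}" E "{}" w] by simp
  moreover have "prod_prob E (\<lambda>e. 1 - r e) ?A' = 1 - prod_prob E r A"
    using prod_prob_complement_image[of "Pow E - A" E r] prod_prob_Diff[OF assms(1) AE] by simp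
  moreover have "sum w (Pow E - A) = sum w (Pow E) - sum w A"
    using assms(1) AE by (simp add: sum_diff finite_subset)
  ultimately show ?thesis
    by (simp add: right_diff_distrib)
qed

lemma enumeration_subset_first:
  assumes "finite E" "Et \<subseteq> E"
  obtains L where "distinct L" "set L = E" "\<And>L1 f L2. L = L1 @ f # L2 \<Longrightarrow> f \<in> Et \<Longrightarrow> set L1 \<subseteq> Et"
proof -
  obtain Lt where Lt: "distinct Lt" "set Lt = Et"
    using finite_distinct_list[OF finite_subset[OF assms(2,1)]] by blast
  obtain Lr where Lr: "distinct Lr" "set Lr = E - Et"
    using finite_distinct_list[OF finite_Diff[OF assms(1)]] by blast
  have "set L1 \<subseteq> Et" if L: "Lt @ Lr = L1 @ f # L2" and f: "f \<in> Et" for L1 f L2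
  proof -
    obtain us where "(Lt = L1 @ us \<and> us @ Lr = f # L2) \<or> (Lt @ us = L1 \<and> Lr = us @ f # L2)"
      using append_eq_append_conv2[THEN iffD1, OF L] by blast
    moreover have "f \<notin> set Lr"
      using Lr(2) f by blast
    ultimately show ?thesis
      using Lt(2) by auto
  qed
  moreover have "distinct (Lt @ Lr)" "set (Lt @ Lr) = E"
    using Lt Lr assms(2) by auto
  ultimately show ?thesis
    using that[of "Lt @ Lr"] by metis
qed

section \<open>Clusters and paths in G \<union> alpha\<close>

definition cluster_rel :: "'v set \<Rightarrow> ('e \<Rightarrow> 'v \<times> 'v) \<Rightarrow> 'v set set \<Rightarrow> 'e set \<Rightarrow> ('v \<times> 'v) set" where
  "cluster_rel V ends \<alpha> \<omega> = Id_on V \<union> {(u, v). u \<in> V \<and> v \<in> V \<and>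
     ((\<exists>e\<in>\<omega>. ends e = (u, v) \<or> ends e = (v, u)) \<or> (\<exists>b\<in>\<alpha>. u \<in> b \<and> v \<in> b))}"

lemma num_clusters_eq_card_quotient:
  "num_clusters V ends \<alpha> \<omega> = card (V // (cluster_rel V ends \<alpha> \<omega>)\<^sup>*)"
  by (simp add: num_clusters_def cluster_rel_def)

lemma sym_cluster_rel: "sym (cluster_rel V ends \<alpha> \<omega>)"
  unfolding cluster_rel_def sym_def by auto

lemma cluster_rel_insert:
  assumes "fst (ends e) \<in> V" "snd (ends e) \<in> V"
  shows "cluster_rel V ends \<alpha> (insert e \<omega>)
       = insert (fst (ends e), snd (ends e)) (insert (snd (ends e), fst (ends e)) (cluster_rel V ends \<alpha> \<omega>))"
  using assms unfolding cluster_rel_def by (cases "ends e") auto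

lemma rtrancl_insert_sym_edge:
  assumes "sym R" "(a, b) \<in> R\<^sup>*"
  shows "(insert (a, b) (insert (b, a) R))\<^sup>* = R\<^sup>*"
proof -
  have "(b, a) \<in> R\<^sup>*"
    using assms sym_rtrancl[OF assms(1)] by (auto dest: symD)
  then show ?thesis
    using assms(2) by (intro rtrancl_subset) auto
qed

lemma card_quotient_rtrancl_antimono:
  assumes "finite V" "R \<subseteq> S"
  shows "card (V // S\<^sup>*) \<le> card (V // R\<^sup>*)"
proof -
  have "S\<^sup>* `` (R\<^sup>* `` {x}) = S\<^sup>* `` {x}" for x
    using rtrancl_mono[OF assms(2)] by (auto intro: rtrancl_trans)
  then have "V // S\<^sup>* = (\<lambda>X. S\<^sup>* `` X) ` (V // R\<^sup>*)"
    unfolding quotient_def by auto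
  moreover have "finite (V // R\<^sup>*)"
    using assms(1) unfolding quotient_def by simp
  ultimately show ?thesis
    using card_image_le by simp
qed

lemma Image_rtrancl_insert_edge:
  assumes "(x, a) \<notin> R\<^sup>*" "(x, b) \<notin> R\<^sup>*"
  shows "(insert (a, b) (insert (b, a) R))\<^sup>* `` {x} = R\<^sup>* `` {x}"
proof
  have "(x, y) \<in> R\<^sup>*" if "(x, y) \<in> (insert (a, b) (insert (b, a) R))\<^sup>*" for y
    using that
  proof (induction rule: rtrancl_induct)
    case (step y z)
    then show ?case
      using assms by (auto intro: rtrancl_into_rtrancl)
  qed simp
  then show "(insert (a, b) (insert (b, a) R))\<^sup>* `` {x} \<subseteq> R\<^sup>* `` {x}"
    by auto
  show "R\<^sup>* `` {x} \<subseteq> (insert (a, b) (insert (b, a) R))\<^sup>* `` {x}"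
    using rtrancl_mono[of R "insert (a, b) (insert (b, a) R)"] by auto
qed

lemma card_quotient_insert_edge:
  fixes R :: "('v \<times> 'v) set" and a b :: 'v
  assumes "finite V" "sym R" "a \<in> V"
  defines "R' \<equiv> insert (a, b) (insert (b, a) R)"
  shows "card (V // R\<^sup>*) \<le> Suc (card (V // R'\<^sup>*))"
proof -
  have fin: "finite (V // R\<^sup>*)" "finite (V // R'\<^sup>*)"
    using assms(1) unfolding quotient_def by simp_all
  have "V // R\<^sup>* \<subseteq> insert (R\<^sup>* `` {a}) (insert (R\<^sup>* `` {b}) (V // R'\<^sup>* - {R'\<^sup>* `` {a}}))"
  proof
    fix X assume "X \<in> V // R\<^sup>*"
    then obtain x where x: "x \<in> V" "X = R\<^sup>* `` {x}"
      unfolding quotient_def by auto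
    show "X \<in> insert (R\<^sup>* `` {a}) (insert (R\<^sup>* `` {b}) (V // R'\<^sup>* - {R'\<^sup>* `` {a}}))"
    proof (cases "(x, a) \<in> R\<^sup>* \<or> (x, b) \<in> R\<^sup>*")
      case True
      then have "X = R\<^sup>* `` {a} \<or> X = R\<^sup>* `` {b}"
        using x(2) sym_rtrancl[OF assms(2)] by (auto intro: rtrancl_trans dest: symD)
      then show ?thesis by auto
    next
      case False
      then have "X = R'\<^sup>* `` {x}" "a \<notin> X"
        using Image_rtrancl_insert_edge[of x a R b] x(2) unfolding R'_def by auto
      moreover have "a \<in> R'\<^sup>* `` {a}"
        by auto
      ultimately show ?thesis
        using x(1) unfolding quotient_def by auto
    qed
  qed
  then have "card (V // R\<^sup>*) \<le> card (insert (R\<^sup>* `` {a}) (insert (R\<^sup>* `` {b}) (V // R'\<^sup>* - {R'\<^sup>* `` {a}})))"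
    using fin by (intro card_mono) auto
  also have "\<dots> \<le> Suc (Suc (card (V // R'\<^sup>* - {R'\<^sup>* `` {a}})))"
    using fin by (simp add: card_insert_if)
  also have "card (V // R'\<^sup>* - {R'\<^sup>* `` {a}}) = card (V // R'\<^sup>*) - 1"
    using fin assms(3) by (simp add: card_Diff_singleton quotientI)
  finally show ?thesis
    using card_gt_0_iff[of "V // R'\<^sup>*"] fin assms(3) quotientI[of a V] by fastforce
qed

lemma wcls_cases:
  assumes "partition_on B \<alpha>"
  shows "(wcls \<alpha> u \<in> \<alpha> \<and> u \<in> wcls \<alpha> u) \<or> wcls \<alpha> u = {u}"
proof (cases "\<exists>b\<in>\<alpha>. u \<in> b")
  case True
  then obtain b where b: "b \<in> \<alpha>" "u \<in> b" by blast
  have uniq: "b' = b" if "b' \<in> \<alpha>" "u \<in> b'" for b'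
  proof (rule ccontr)
    assume "b' \<noteq> b"
    then have "b' \<inter> b = {}"
      by (rule disjointD[OF partition_onD2[OF assms] that(1) b(1)])
    then show False
      using that(2) b(2) by blast
  qed
  have "(THE b. b \<in> \<alpha> \<and> u \<in> b) = b"
    by (rule the_equality) (use b uniq in blast)+
  then have "wcls \<alpha> u = b"
    unfolding wcls_def using True by (simp only: if_True)
  then show ?thesis
    using b by blast
next
  case False
  then show ?thesis
    unfolding wcls_def by (simp only: if_False) simp
qed

lemma same_wcls_imp_cluster_rel:
  assumes "partition_on B \<alpha>" "u \<in> V" "v \<in> V" "wcls \<alpha> u = wcls \<alpha> v"
  shows "(u, v) \<in> cluster_rel V ends \<alpha> \<omega>"
proof -
  have v: "v \<in> wcls \<alpha> u"
    using wcls_cases[OF assms(1), of v] assms(4) by auto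
  from wcls_cases[OF assms(1), of u] show ?thesis
  proof
    assume "wcls \<alpha> u \<in> \<alpha> \<and> u \<in> wcls \<alpha> u"
    then show ?thesis
      using v assms(2,3) unfolding cluster_rel_def by blast
  next
    assume "wcls \<alpha> u = {u}"
    then show ?thesis
      using v assms(2) unfolding cluster_rel_def by auto
  qed
qed

lemma edge_imp_cluster_connected:
  assumes "partition_on B \<alpha>" "e \<in> \<omega>" "fst (ends e) \<in> V" "snd (ends e) \<in> V" "u \<in> V" "v \<in> V"
    and "{wcls \<alpha> (fst (ends e)), wcls \<alpha> (snd (ends e))} = {wcls \<alpha> u, wcls \<alpha> v}"
  shows "(u, v) \<in> (cluster_rel V ends \<alpha> \<omega>)\<^sup>*"
proof -
  let ?R = "cluster_rel V ends \<alpha> \<omega>" and ?c = "fst (ends e)" and ?d = "snd (ends e)"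
  have wired: "(x, y) \<in> ?R" if "x \<in> V" "y \<in> V" "wcls \<alpha> x = wcls \<alpha> y" for x y
    using same_wcls_imp_cluster_rel[OF assms(1) that] .
  have edge: "(?c, ?d) \<in> ?R" "(?d, ?c) \<in> ?R"
    using assms(2-4) unfolding cluster_rel_def by (auto intro!: bexI[of _ e])
  consider "wcls \<alpha> ?c = wcls \<alpha> u" "wcls \<alpha> ?d = wcls \<alpha> v" | "wcls \<alpha> ?c = wcls \<alpha> v" "wcls \<alpha> ?d = wcls \<alpha> u"
    using assms(7) by (auto simp: doubleton_eq_iff)
  then show ?thesis
  proof cases
    case 1
    then have "(u, ?c) \<in> ?R" "(?d, v) \<in> ?R"
      using wired assms(3-6) by simp_all
    then show ?thesis
      using edge(1) by (blast intro: rtrancl_into_rtrancl)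
  next
    case 2
    then have "(u, ?d) \<in> ?R" "(?c, v) \<in> ?R"
      using wired assms(3-6) by simp_all
    then show ?thesis
      using edge(2) by (blast intro: rtrancl_into_rtrancl)
  qed
qed

lemma walk_imp_cluster_connected:
  assumes "partition_on B \<alpha>" "walk_GA V \<alpha> ends F x y es" "set es \<subseteq> \<omega>" "x \<in> V" "y \<in> V"
    and ends: "\<forall>e\<in>\<omega>. fst (ends e) \<in> V \<and> snd (ends e) \<in> V"
  shows "(x, y) \<in> (cluster_rel V ends \<alpha> \<omega>)\<^sup>*"
proof -
  let ?R = "cluster_rel V ends \<alpha> \<omega>"
  obtain vs where vs: "length vs = Suc (length es)" "set vs \<subseteq> V"
    "wcls \<alpha> (hd vs) = wcls \<alpha> x" "wcls \<alpha> (last vs) = wcls \<alpha> y"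
    "\<forall>i<length es. {wcls \<alpha> (fst (ends (es ! i))), wcls \<alpha> (snd (ends (es ! i)))}
                         = {wcls \<alpha> (vs ! i), wcls \<alpha> (vs ! Suc i)}"
    using assms(2) unfolding walk_GA_def by (elim exE conjE) (rule that)
  have vs_V: "vs ! i \<in> V" if "i \<le> length es" for i
    using vs(1,2) that by (auto intro: nth_mem)
  have step: "(vs ! i, vs ! Suc i) \<in> ?R\<^sup>*" if "i < length es" for i
  proof -
    have "es ! i \<in> \<omega>"
      using that assms(3) nth_mem by blast
    then show ?thesis
      using that ends vs(5) vs_V[of i] vs_V[of "Suc i"]
      by (intro edge_imp_cluster_connected[OF assms(1), of "es ! i"]) auto
  qed
  have chain: "(vs ! 0, vs ! i) \<in> ?R\<^sup>*" if "i \<le> length es" for i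
    using that
  proof (induction i)
    case (Suc i)
    then show ?case
      using step[of i] by (auto intro: rtrancl_trans)
  qed simp
  have "hd vs = vs ! 0"
    using vs(1) by (cases vs) auto
  moreover have "last vs = vs ! length es"
    using vs(1) by (subst last_conv_nth) auto
  ultimately have "(x, vs ! 0) \<in> ?R" "(vs ! length es, y) \<in> ?R"
    using same_wcls_imp_cluster_rel[OF assms(1) assms(4) vs_V[of 0]]
      same_wcls_imp_cluster_rel[OF assms(1) vs_V[of "length es"] assms(5)] vs(3,4)
    by auto
  then show ?thesis
    using chain[of "length es"] by (blast intro: rtrancl_into_rtrancl converse_rtrancl_into_rtrancl)
qed

section \<open>The FK measure\<close>

locale fk_model =
  fixes V :: "'v set" and E :: "'e set" and ends :: "'e \<Rightarrow> 'v \<times> 'v"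
    and B :: "'v set" and \<alpha> :: "'v set set" and p q p' :: real and Et :: "'e set"
  assumes finite_V: "finite V" and finite_E: "finite E"
    and ends_in_V: "\<forall>e\<in>E. fst (ends e) \<in> V \<and> snd (ends e) \<in> V"
    and partition: "partition_on B \<alpha>"
    and p_nonneg: "0 \<le> p" and p_le_1: "p \<le> 1" and q_pos: "0 < q"
    and Et_subset: "Et \<subseteq> E"
    and p'_eq: "p' = p / (p + q * (1 - p))"
begin

abbreviation w :: "'e set \<Rightarrow> real" where
  "w \<equiv> fk_weight V E ends \<alpha> p q"

lemma p'_denominator_pos: "0 < p + q * (1 - p)"
proof (cases "p = 0")
  case False
  then show ?thesis
    using p_nonneg p_le_1 q_pos by (simp add: add_pos_nonneg)
qed (simp add: q_pos)

lemma p'_bounds: "0 \<le> p'" "p' \<le> 1"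
  unfolding p'_eq using p'_denominator_pos p_nonneg p_le_1 q_pos by simp_all

lemma p_strict_bounds_if_ne:
  assumes "p \<noteq> p'"
  shows "0 < p" "p < 1"
proof -
  show "0 < p"
    using assms p_nonneg unfolding p'_eq by (cases "p = 0") simp_all
  show "p < 1"
    using assms p_le_1 unfolding p'_eq by (cases "p = 1") simp_all
qed

lemma fk_weight_nonneg: "0 \<le> w \<omega>"
  unfolding fk_weight_def using p_nonneg p_le_1 q_pos by (intro mult_nonneg_nonneg prod_nonneg) auto

lemma sum_fk_weight_pos:
  assumes "0 < p" "p < 1"
  shows "0 < sum w (Pow E)"
proof -
  have "0 < w \<omega>" for \<omega>
    unfolding fk_weight_def using assms q_pos by (intro mult_pos_pos prod_pos) auto
  then show ?thesis
    using finite_E by (intro sum_pos) auto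
qed

(* Opening f changes the number of clusters by 0 or -1, and by 0 if its endpoints are already
   connected. *)
lemma fk_weight_insert_edge:
  assumes "f \<in> E" "\<eta> \<subseteq> E - {f}"
  obtains c where "c = p \<or> c = p'"
    and "(fst (ends f), snd (ends f)) \<in> (cluster_rel V ends \<alpha> \<eta>)\<^sup>* \<Longrightarrow> c = p"
    and "w (insert f \<eta>) = c * (w (insert f \<eta>) + w \<eta>)"
proof -
  let ?X = "\<Prod>e\<in>E - {f}. if e \<in> \<eta> then p else 1 - p"
  let ?k1 = "num_clusters V ends \<alpha> (insert f \<eta>)" and ?k0 = "num_clusters V ends \<alpha> \<eta>"
  let ?a = "fst (ends f)" and ?b = "snd (ends f)"
  have "(\<Prod>e\<in>E - {f}. if e \<in> insert f \<eta> then p else 1 - p) = ?X"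
    by (rule prod.cong) auto
  then have w1: "w (insert f \<eta>) = p * ?X * q ^ ?k1"
    unfolding fk_weight_def
    using prod.remove[OF finite_E assms(1), of "\<lambda>e. if e \<in> insert f \<eta> then p else 1 - p"] by simp
  have w0: "w \<eta> = (1 - p) * ?X * q ^ ?k0"
    unfolding fk_weight_def
    using prod.remove[OF finite_E assms(1), of "\<lambda>e. if e \<in> \<eta> then p else 1 - p"] assms(2) by auto
  have ab: "?a \<in> V" "?b \<in> V"
    using ends_in_V assms(1) by auto
  have k1: "?k1 \<le> ?k0" "?k0 \<le> Suc ?k1"
    unfolding num_clusters_eq_card_quotient cluster_rel_insert[of ends f V \<alpha> \<eta>, OF ab]
    by (rule card_quotient_rtrancl_antimono[OF finite_V], blast)
       (rule card_quotient_insert_edge[OF finite_V sym_cluster_rel ab(1)])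
  have k_eq: "?k1 = ?k0" if "(?a, ?b) \<in> (cluster_rel V ends \<alpha> \<eta>)\<^sup>*"
    unfolding num_clusters_eq_card_quotient cluster_rel_insert[of ends f V \<alpha> \<eta>, OF ab]
    using rtrancl_insert_sym_edge[OF sym_cluster_rel that] by simp
  show ?thesis
  proof (cases "?k0 = ?k1")
    case True
    then show ?thesis
      using that[of p] unfolding w1 w0 by (simp add: algebra_simps)
  next
    case False
    then have "?k0 = Suc ?k1"
      using k1 by simp
    then have "w (insert f \<eta>) = p' * (w (insert f \<eta>) + w \<eta>)"
      unfolding w1 w0 p'_eq using p'_denominator_pos by (simp add: field_simps)
    then show ?thesis
      using that[of p'] k_eq False by auto
  qed
qed

definition path_open :: "'e \<Rightarrow> 'e set \<Rightarrow> bool" where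
  "path_open f \<omega> \<longleftrightarrow> (\<exists>\<gamma>\<in>Gamma V E ends \<alpha> Et f. set \<gamma> \<subseteq> \<omega>)"

lemma path_open_mono: "path_open f \<omega> \<Longrightarrow> \<omega> \<subseteq> \<omega>' \<Longrightarrow> path_open f \<omega>'"
  unfolding path_open_def by blast

lemma path_open_restrict:
  assumes "E - Et \<subseteq> F"
  shows "path_open f (\<omega> \<inter> F) \<longleftrightarrow> path_open f \<omega>"
proof -
  have "set \<gamma> \<subseteq> E - Et" if "\<gamma> \<in> Gamma V E ends \<alpha> Et f" for \<gamma>
    using that unfolding Gamma_def walk_GA_def by auto
  then show ?thesis
    unfolding path_open_def using assms by blast
qed

lemma path_open_imp_connected:
  assumes "f \<in> E" "\<eta> \<subseteq> E" "path_open f \<eta>"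
  shows "(fst (ends f), snd (ends f)) \<in> (cluster_rel V ends \<alpha> \<eta>)\<^sup>*"
proof -
  obtain \<gamma> where "walk_GA V \<alpha> ends (E - Et) (fst (ends f)) (snd (ends f)) \<gamma>" "set \<gamma> \<subseteq> \<eta>"
    using assms(3) unfolding path_open_def Gamma_def by blast
  then show ?thesis
    using walk_imp_cluster_connected[OF partition] ends_in_V assms(1,2) by blast
qed

lemma fk_weight_insert_path:
  assumes "f \<in> E" "\<eta> \<subseteq> E - {f}"
  obtains c where "c = p \<or> c = p'" and "path_open f \<eta> \<Longrightarrow> c = p"
    and "w (insert f \<eta>) = c * (w (insert f \<eta>) + w \<eta>)"
proof -
  obtain c where c: "c = p \<or> c = p'"
    and connected: "(fst (ends f), snd (ends f)) \<in> (cluster_rel V ends \<alpha> \<eta>)\<^sup>* \<Longrightarrow> c = p"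
    and w_eq: "w (insert f \<eta>) = c * (w (insert f \<eta>) + w \<eta>)"
    using fk_weight_insert_edge[OF assms] by blast
  have "path_open f \<eta> \<Longrightarrow> c = p"
    using connected path_open_imp_connected[OF assms(1)] assms(2) by blast
  then show ?thesis
    by (rule that[OF c _ w_eq])
qed

lemma fk_weight_insert_le:
  assumes "f \<in> E" "\<eta> \<subseteq> E - {f}"
  shows "w (insert f \<eta>) \<le> (if path_open f \<eta> then p else max p p') * (w (insert f \<eta>) + w \<eta>)"
proof -
  obtain c where c: "c = p \<or> c = p'" "path_open f \<eta> \<Longrightarrow> c = p"
    and w_eq: "w (insert f \<eta>) = c * (w (insert f \<eta>) + w \<eta>)"
    using fk_weight_insert_path[OF assms] by blast
  have "c \<le> (if path_open f \<eta> then p else max p p')"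
    using c by auto
  then have "c * (w (insert f \<eta>) + w \<eta>) \<le> (if path_open f \<eta> then p else max p p') * (w (insert f \<eta>) + w \<eta>)"
    using fk_weight_nonneg by (intro mult_right_mono) (simp_all add: add_nonneg_nonneg)
  then show ?thesis
    using w_eq by linarith
qed

lemma fk_weight_insert_ge:
  assumes "f \<in> E" "\<eta> \<subseteq> E - {f}"
  shows "(if path_open f \<eta> then p else min p p') * (w (insert f \<eta>) + w \<eta>) \<le> w (insert f \<eta>)"
proof -
  obtain c where c: "c = p \<or> c = p'" "path_open f \<eta> \<Longrightarrow> c = p"
    and w_eq: "w (insert f \<eta>) = c * (w (insert f \<eta>) + w \<eta>)"
    using fk_weight_insert_path[OF assms] by blast
  have "(if path_open f \<eta> then p else min p p') \<le> c"
    using c by auto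
  then have "(if path_open f \<eta> then p else min p p') * (w (insert f \<eta>) + w \<eta>) \<le> c * (w (insert f \<eta>) + w \<eta>)"
    using fk_weight_nonneg by (intro mult_right_mono) (simp_all add: add_nonneg_nonneg)
  then show ?thesis
    using w_eq by linarith
qed

lemma fk_weight_insert_ge_min:
  assumes "f \<in> E" "\<eta> \<subseteq> E - {f}"
  shows "min p p' * (w (insert f \<eta>) + w \<eta>) \<le> w (insert f \<eta>)"
proof -
  have "min p p' * (w (insert f \<eta>) + w \<eta>) \<le> (if path_open f \<eta> then p else min p p') * (w (insert f \<eta>) + w \<eta>)"
    using fk_weight_nonneg by (intro mult_right_mono) (auto simp: add_nonneg_nonneg)
  then show ?thesis
    using fk_weight_insert_ge[OF assms] by linarith
qed

definition path_prob :: "'e \<Rightarrow> real" where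
  "path_prob f = prod_prob E (\<lambda>_. min p p') {\<omega>\<in>Pow E. path_open f \<omega>}"

lemma min_p_p'_bounds: "\<forall>e\<in>F. 0 \<le> min p p' \<and> min p p' \<le> 1"
  using p_nonneg p_le_1 p'_bounds by auto

lemma path_prob_bounds: "0 \<le> path_prob f" "path_prob f \<le> 1"
  unfolding path_prob_def
  by (rule prod_prob_nonneg[OF min_p_p'_bounds], rule prod_prob_le_1[OF finite_E min_p_p'_bounds]) auto

(* Conditioning on edges of Et does not affect the path event, which only sees E - Et; on the
   unconditioned edges the marginal of phi dominates the product measure with parameter
   min p p', edge by edge. *)
lemma path_prob_le_cylinder:
  assumes "e \<in> Et" "K \<subseteq> Et" "e \<notin> K" "\<sigma> \<subseteq> K"
  shows "path_prob e * (\<Sum>\<eta>\<in>cylinder (E - {e}) K \<sigma>. w (insert e \<eta>) + w \<eta>)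
       \<le> (\<Sum>\<eta>\<in>{\<eta>\<in>cylinder (E - {e}) K \<sigma>. path_open e \<eta>}. w (insert e \<eta>) + w \<eta>)"
proof -
  define D where "D = E - {e} - K"
  define v where "v \<tau> = w (insert e (\<sigma> \<union> \<tau>)) + w (\<sigma> \<union> \<tau>)" for \<tau>
  let ?m = "min p p'"
  let ?T = "\<lambda>\<eta>. w (insert e \<eta>) + w \<eta>"
  have eE: "e \<in> E" and KE: "K \<subseteq> E - {e}"
    using assms Et_subset by auto
  have finD: "finite D"
    using finite_E by (simp add: D_def)
  obtain L where L: "distinct L" "set L = D"
    using finite_distinct_list[OF finD] by blast
  have "open_given_prefix_ge D v (\<lambda>_. ?m) L"
  proof (rule open_given_prefix_ge_pointwise[OF finD L])
    fix f \<zeta> assume "f \<in> D" "\<zeta> \<subseteq> D - {f}"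
    then have fE: "f \<in> E" and X: "\<sigma> \<union> \<zeta> \<subseteq> E - {f}" "insert e (\<sigma> \<union> \<zeta>) \<subseteq> E - {f}"
      using assms(4) KE eE by (auto simp: D_def)
    have "v (insert f \<zeta>) = w (insert f (insert e (\<sigma> \<union> \<zeta>))) + w (insert f (\<sigma> \<union> \<zeta>))"
      by (simp add: v_def insert_commute)
    then show "?m * (v (insert f \<zeta>) + v \<zeta>) \<le> v (insert f \<zeta>)"
      using fk_weight_insert_ge_min[OF fE X(1)] fk_weight_insert_ge_min[OF fE X(2)]
      by (simp add: v_def distrib_left)
  qed
  moreover have "increasing_event D {\<tau>\<in>Pow D. path_open e \<tau>}"
    unfolding increasing_event_def using path_open_mono by blast
  moreover have "\<forall>\<tau>\<in>Pow D. 0 \<le> v \<tau>"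
    using fk_weight_nonneg by (simp add: v_def add_nonneg_nonneg)
  ultimately have main: "sum v (Pow D) * prod_prob D (\<lambda>_. ?m) {\<tau>\<in>Pow D. path_open e \<tau>}
      \<le> sum v {\<tau>\<in>Pow D. path_open e \<tau>}"
    by (intro prod_prob_le_sum_event[OF finD L _ min_p_p'_bounds])
  have total: "sum v (Pow D) = sum ?T (cylinder (E - {e}) K \<sigma>)"
    using sum_cylinder_shift[OF assms(4) KE, of ?T] by (simp add: v_def D_def)
  have path_D: "path_open e (\<omega> \<inter> D) \<longleftrightarrow> path_open e \<omega>" for \<omega>
    by (rule path_open_restrict) (use assms Et_subset in \<open>auto simp: D_def\<close>)
  have "path_open e (\<sigma> \<union> \<tau>) \<longleftrightarrow> path_open e \<tau>" if "\<tau> \<subseteq> D" for \<tau>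
  proof -
    have "(\<sigma> \<union> \<tau>) \<inter> D = \<tau> \<inter> D"
      using assms(4) by (auto simp: D_def)
    then show ?thesis
      using path_D[of "\<sigma> \<union> \<tau>"] path_D[of \<tau>] by simp
  qed
  then have event: "sum v {\<tau>\<in>Pow D. path_open e \<tau>} = sum ?T {\<eta>\<in>cylinder (E - {e}) K \<sigma>. path_open e \<eta>}"
    using sum_cylinder_shift_filter[OF _ assms(4) KE, of "path_open e" ?T] finite_E
    by (simp add: v_def D_def)
  have prob: "prod_prob D (\<lambda>_. ?m) {\<tau>\<in>Pow D. path_open e \<tau>} = path_prob e"
  proof -
    have "E = D \<union> insert e K" "insert e K \<inter> D = {}"
      using eE KE by (auto simp: D_def)
    then show ?thesis
      unfolding path_prob_def
      using prod_prob_restrict[of "insert e K" D "path_open e" "\<lambda>_. ?m"] path_D finite_subset[OF KE] finite_E finD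
      by simp
  qed
  show ?thesis
    using main unfolding total event prob by (simp only: mult.commute)
qed

(* For p < p' this is p' - eps f and for p' < p it is p' + eps f, with eps as in the theorem. *)
definition comparison_prob :: "'e \<Rightarrow> real" where
  "comparison_prob f = p' + (if f \<in> Et then (p - p') * path_prob f else 0)"

lemma comparison_prob_bounds: "\<forall>f\<in>E. 0 \<le> comparison_prob f \<and> comparison_prob f \<le> 1"
proof
  fix f
  have convex: "0 \<le> (1 - t) * x + t * y \<and> (1 - t) * x + t * y \<le> 1"
    if "0 \<le> t" "t \<le> 1" "0 \<le> x" "x \<le> 1" "0 \<le> y" "y \<le> 1" for t x y :: real
    using that convex_bound_le[of x 1 y "1 - t" t] by simp
  let ?P = "if f \<in> Et then path_prob f else 0"
  have "comparison_prob f = (1 - ?P) * p' + ?P * p"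
    unfolding comparison_prob_def by (simp add: left_diff_distrib)
  moreover have "0 \<le> ?P" "?P \<le> 1"
    using path_prob_bounds[of f] by auto
  ultimately show "0 \<le> comparison_prob f \<and> comparison_prob f \<le> 1"
    using convex[of ?P p' p] p'_bounds p_nonneg p_le_1 by simp
qed

lemma sum_cylinder_open_fk:
  assumes "f \<in> E" "K \<subseteq> E - {f}" "\<sigma> \<subseteq> K" "f \<in> Et \<Longrightarrow> K \<subseteq> Et"
  shows "p \<le> p' \<Longrightarrow> sum w (cylinder E (insert f K) (insert f \<sigma>)) \<le> comparison_prob f * sum w (cylinder E K \<sigma>)"
    and "p' \<le> p \<Longrightarrow> comparison_prob f * sum w (cylinder E K \<sigma>) \<le> sum w (cylinder E (insert f K) (insert f \<sigma>))"
proof -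
  let ?Q = "cylinder (E - {f}) K \<sigma>"
  let ?T = "\<lambda>\<eta>. w (insert f \<eta>) + w \<eta>"
  let ?C = "{\<eta>\<in>?Q. path_open f \<eta>}"
  let ?P = "if f \<in> Et then path_prob f else 0"
  have fK: "f \<notin> K"
    using assms(2) by auto
  note split = sum_cylinder_insert[OF finite_E assms(1) fK assms(3), of w]
  have mixed: "(\<Sum>\<eta>\<in>?Q. (if path_open f \<eta> then p else p') * ?T \<eta>) = p' * sum ?T ?Q + (p - p') * sum ?T ?C"
    using finite_E by (simp add: sum_if_mult_eq)
  have path: "?P * sum ?T ?Q \<le> sum ?T ?C"
    using path_prob_le_cylinder[OF _ assms(4) fK assms(3)] fk_weight_nonneg
    by (auto intro!: sum_nonneg add_nonneg_nonneg)
  have r: "comparison_prob f * sum ?T ?Q = p' * sum ?T ?Q + (p - p') * (?P * sum ?T ?Q)"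
    by (simp add: comparison_prob_def algebra_simps)
  have pointwise: "\<eta> \<in> ?Q \<Longrightarrow> \<eta> \<subseteq> E - {f}" for \<eta>
    by (simp add: cylinder_def)
  show "sum w (cylinder E (insert f K) (insert f \<sigma>)) \<le> comparison_prob f * sum w (cylinder E K \<sigma>)"
    if "p \<le> p'"
  proof -
    have "(\<Sum>\<eta>\<in>?Q. w (insert f \<eta>)) \<le> (\<Sum>\<eta>\<in>?Q. (if path_open f \<eta> then p else p') * ?T \<eta>)"
      using fk_weight_insert_le[OF assms(1) pointwise] unfolding max_absorb2[OF that] by (rule sum_mono)
    also have "\<dots> \<le> p' * sum ?T ?Q + (p - p') * (?P * sum ?T ?Q)"
      unfolding mixed using path that by (simp add: mult_left_mono_neg)
    finally show ?thesis
      unfolding split r .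
  qed
  show "comparison_prob f * sum w (cylinder E K \<sigma>) \<le> sum w (cylinder E (insert f K) (insert f \<sigma>))"
    if "p' \<le> p"
  proof -
    have "p' * sum ?T ?Q + (p - p') * (?P * sum ?T ?Q) \<le> (\<Sum>\<eta>\<in>?Q. (if path_open f \<eta> then p else p') * ?T \<eta>)"
      unfolding mixed using path that by (simp add: mult_left_mono)
    also have "\<dots> \<le> (\<Sum>\<eta>\<in>?Q. w (insert f \<eta>))"
      using fk_weight_insert_ge[OF assms(1) pointwise] unfolding min_absorb2[OF that] by (rule sum_mono)
    finally show ?thesis
      unfolding split r .
  qed
qed

lemma fk_open_given_prefix:
  assumes L: "distinct L" "set L = E" "\<And>L1 f L2. L = L1 @ f # L2 \<Longrightarrow> f \<in> Et \<Longrightarrow> set L1 \<subseteq> Et"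
  shows "p \<le> p' \<Longrightarrow> open_given_prefix_le E w comparison_prob L"
    and "p' \<le> p \<Longrightarrow> open_given_prefix_ge E w comparison_prob L"
proof -
  have step: "f \<in> E" "set L1 \<subseteq> E - {f}" "f \<in> Et \<Longrightarrow> set L1 \<subseteq> Et" if "L = L1 @ f # L2" for L1 f L2
    using L that by auto
  show "open_given_prefix_le E w comparison_prob L" if "p \<le> p'"
    unfolding open_given_prefix_le_def
    using sum_cylinder_open_fk(1)[OF step(1,2) _ step(3) that] by blast
  show "open_given_prefix_ge E w comparison_prob L" if "p' \<le> p"
    unfolding open_given_prefix_ge_def
    using sum_cylinder_open_fk(2)[OF step(1,2) _ step(3) that] by blast
qed

lemma fk_prob_le_comparison:
  assumes "p < p'" "increasing_event E A"
  shows "fk_prob V E ends \<alpha> p q A \<le> prod_prob E comparison_prob A"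
proof -
  obtain L where L: "distinct L" "set L = E" "\<And>L1 f L2. L = L1 @ f # L2 \<Longrightarrow> f \<in> Et \<Longrightarrow> set L1 \<subseteq> Et"
    using enumeration_subset_first[OF finite_E Et_subset] by blast
  have "sum w A \<le> sum w (Pow E) * prod_prob E comparison_prob A"
    using assms fk_weight_nonneg comparison_prob_bounds
    by (intro sum_event_le_prod_prob[OF finite_E L(1,2) _ _ fk_open_given_prefix(1)[OF L]]) auto
  moreover have "0 < sum w (Pow E)"
    using sum_fk_weight_pos p_strict_bounds_if_ne assms(1) by simp
  ultimately show ?thesis
    unfolding fk_prob_def by (simp add: divide_le_eq mult.commute)
qed

lemma comparison_le_fk_prob:
  assumes "p' < p" "increasing_event E A"
  shows "prod_prob E comparison_prob A \<le> fk_prob V E ends \<alpha> p q A"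
proof -
  obtain L where L: "distinct L" "set L = E" "\<And>L1 f L2. L = L1 @ f # L2 \<Longrightarrow> f \<in> Et \<Longrightarrow> set L1 \<subseteq> Et"
    using enumeration_subset_first[OF finite_E Et_subset] by blast
  have "sum w (Pow E) * prod_prob E comparison_prob A \<le> sum w A"
    using assms fk_weight_nonneg comparison_prob_bounds
    by (intro prod_prob_le_sum_event[OF finite_E L(1,2) _ _ fk_open_given_prefix(2)[OF L]]) auto
  moreover have "0 < sum w (Pow E)"
    using sum_fk_weight_pos p_strict_bounds_if_ne assms(1) by simp
  ultimately show ?thesis
    unfolding fk_prob_def by (simp add: le_divide_eq mult.commute)
qed

end

theorem proposition3p2:
  fixes V :: "'v set" and E :: "'e set" and ends :: "'e \<Rightarrow> 'v \<times> 'v"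
    and B :: "'v set" and \<alpha> :: "'v set set" and p q :: real and Et :: "'e set"
  assumes "finite V" and "finite E"
    and "\<forall>e\<in>E. fst (ends e) \<in> V \<and> snd (ends e) \<in> V"
    and "graph_connected V E ends"
    and "B \<subseteq> V" and "partition_on B \<alpha>"
    and "0 \<le> p" and "p \<le> 1" and "q > 0"
    and "Et \<subseteq> E"
    and "\<forall>e\<in>Et. Gamma V E ends \<alpha> Et e \<noteq> {}"
  defines "p' \<equiv> p / (p + q * (1 - p))"
  defines "eps \<equiv> (\<lambda>e. \<bar>p' - p\<bar> * prod_prob E (\<lambda>_. min p p')
              {\<omega> \<in> Pow E. \<exists>\<gamma>\<in>Gamma V E ends \<alpha> Et e. set \<gamma> \<subseteq> \<omega>})"
  shows "(p < p' \<longrightarrow> stoch_le E (fk_prob V E ends \<alpha> p q)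
                        (prod_prob E (\<lambda>e. p' - (if e \<in> Et then eps e else 0))))
       \<and> (p > p' \<longrightarrow> stoch_le E (prod_prob E (\<lambda>e. p' + (if e \<in> Et then eps e else 0)))
                        (fk_prob V E ends \<alpha> p q))"
proof -
  interpret fk_model V E ends B \<alpha> p q p' Et
    using assms(1-3,6-10) by unfold_locales (simp_all add: p'_def)
  have eps: "eps = (\<lambda>e. \<bar>p' - p\<bar> * path_prob e)"
    unfolding eps_def path_prob_def path_open_def ..
  show ?thesis
  proof (intro conjI impI)
    assume "p < p'"
    then have "(\<lambda>e. p' - (if e \<in> Et then eps e else 0)) = comparison_prob"
      unfolding eps comparison_prob_def by (auto simp: algebra_simps)
    then show "stoch_le E (fk_prob V E ends \<alpha> p q) (prod_prob E (\<lambda>e. p' - (if e \<in> Et then eps e else 0)))"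
      unfolding stoch_le_def using fk_prob_le_comparison[OF \<open>p < p'\<close>] by simp
  next
    assume "p' < p"
    then have "(\<lambda>e. p' + (if e \<in> Et then eps e else 0)) = comparison_prob"
      unfolding eps comparison_prob_def by (auto simp: algebra_simps)
    then show "stoch_le E (prod_prob E (\<lambda>e. p' + (if e \<in> Et then eps e else 0))) (fk_prob V E ends \<alpha> p q)"
      unfolding stoch_le_def using comparison_le_fk_prob[OF \<open>p' < p\<close>] by simp
  qed
qed

end
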